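(* Let $(b,c)$ be a connected graph over a countable set $X$, $G$ a nilpotent group acting cocompactly on $X$ with $H_{b,c}$ $G$-invariant, and $x_0\in X$. Let $R\subseteq G$ be a normal subgroup, $\pi:G\to G/R$ the projection and $Q(R)=\pi^{-1}(Z(G/R))$, where $Z(G/R)$ is the centre. Then for all $f\in\mathcal{K}^R$, $q\in Q(R)$ and $g\in G$ we have $T_qT_gf=T_gT_qf$.
   Context: A graph over $X$ is $(b,c)$ with $b:X\times X\to[0,\infty)$, $c:X\to\mathbb{R}$, $\sum_yb(x,y)<\infty$ ($b$ need not be symmetric); connected: any two points are joined by a finite sequence $y_1,\dots,y_n$ with $b(y_i,y_{i+1})>0$. $H_{b,c}f(x)=\sum_yb(x,y)(f(x)-f(y))+c(x)f(x)$ on $\mathrm{Dom}(H)=\{f:\sum_yb(x,y)|f(y)|<\infty\ \forall x\}$; $\mathcal{H}^+$: nonnegative nonzero $f$ with $Hf=0$. $T_gf(x)=f(g^{-1}x)$; cocompact: $GV=X$ for some finite $V$; $H$ is $G$-invariant if $T_g$ preserves $\mathrm{Dom}(H)$ and $HT_g=T_gH$. $\mathcal{K}$ is the closure in $C(X)$ (product topology) of $\{f\in\mathcal{H}^+:f(x_0)=1\}$ and $\mathcal{K}^R=\{f\in\mathcal{K}:T_rf=f\ \forall r\in R\}$. *)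

theory Defs
  imports "HOL-Analysis.Analysis" "HOL-Algebra.Group_Action" "HOL-Algebra.Coset" "HOL-Algebra.Generated_Groups"
begin

fun lower_central :: "('g, 'b) monoid_scheme \<Rightarrow> nat \<Rightarrow> 'g set" where
  "lower_central G 0 = carrier G"
| "lower_central G (Suc n) =
     generate G (\<Union>g\<in>carrier G. \<Union>h\<in>lower_central G n.
                   {g \<otimes>\<^bsub>G\<^esub> h \<otimes>\<^bsub>G\<^esub> inv\<^bsub>G\<^esub> g \<otimes>\<^bsub>G\<^esub> inv\<^bsub>G\<^esub> h})"

definition nilpotent_group :: "('g, 'b) monoid_scheme \<Rightarrow> bool" where
  "nilpotent_group G \<longleftrightarrow> group G \<and> (\<exists>n. lower_central G n = {\<one>\<^bsub>G\<^esub>})"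

definition group_center :: "('g, 'b) monoid_scheme \<Rightarrow> 'g set" where
  "group_center G = {z \<in> carrier G. \<forall>g\<in>carrier G. z \<otimes>\<^bsub>G\<^esub> g = g \<otimes>\<^bsub>G\<^esub> z}"

definition QR :: "('g, 'b) monoid_scheme \<Rightarrow> 'g set \<Rightarrow> 'g set" where
  "QR G R = {q \<in> carrier G. R #>\<^bsub>G\<^esub> q \<in> group_center (G Mod R)}"

definition transl :: "('g, 'b) monoid_scheme \<Rightarrow> ('g \<Rightarrow> 'x \<Rightarrow> 'x) \<Rightarrow> 'g \<Rightarrow> ('x \<Rightarrow> real) \<Rightarrow> 'x \<Rightarrow> real" where
  "transl G \<phi> g f = (\<lambda>x. f (\<phi> (inv\<^bsub>G\<^esub> g) x))"

(* graph over the whole (countable) type 'x *)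
definition is_graph :: "('x \<Rightarrow> 'x \<Rightarrow> real) \<Rightarrow> bool" where
  "is_graph b \<longleftrightarrow> (\<forall>x y. 0 \<le> b x y) \<and> (\<forall>x. b x summable_on UNIV)"

definition graph_connected :: "('x \<Rightarrow> 'x \<Rightarrow> real) \<Rightarrow> bool" where
  "graph_connected b \<longleftrightarrow> (\<forall>x y. (\<lambda>u v. 0 < b u v)\<^sup>*\<^sup>* x y)"

definition DomH :: "('x \<Rightarrow> 'x \<Rightarrow> real) \<Rightarrow> ('x \<Rightarrow> real) set" where
  "DomH b = {f. \<forall>x. (\<lambda>y. b x y * \<bar>f y\<bar>) summable_on UNIV}"

definition Hop :: "('x \<Rightarrow> 'x \<Rightarrow> real) \<Rightarrow> ('x \<Rightarrow> real) \<Rightarrow> ('x \<Rightarrow> real) \<Rightarrow> 'x \<Rightarrow> real" where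
  "Hop b c f x = (\<Sum>\<^sub>\<infinity>y. b x y * (f x - f y)) + c x * f x"

definition Hplus :: "('x \<Rightarrow> 'x \<Rightarrow> real) \<Rightarrow> ('x \<Rightarrow> real) \<Rightarrow> ('x \<Rightarrow> real) set" where
  "Hplus b c = {f \<in> DomH b. (\<forall>x. 0 \<le> f x) \<and> f \<noteq> (\<lambda>_. 0) \<and> Hop b c f = (\<lambda>_. 0)}"

definition cocompact :: "('g, 'b) monoid_scheme \<Rightarrow> ('g \<Rightarrow> 'x \<Rightarrow> 'x) \<Rightarrow> bool" where
  "cocompact G \<phi> \<longleftrightarrow> (\<exists>V. finite V \<and> (\<Union>g\<in>carrier G. \<phi> g ` V) = UNIV)"

definition G_invariant :: "('g, 'b) monoid_scheme \<Rightarrow> ('g \<Rightarrow> 'x \<Rightarrow> 'x) \<Rightarrow> ('x \<Rightarrow> 'x \<Rightarrow> real) \<Rightarrow> ('x \<Rightarrow> real) \<Rightarrow> bool" where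
  "G_invariant G \<phi> b c \<longleftrightarrow> (\<forall>g\<in>carrier G. (\<forall>f\<in>DomH b. transl G \<phi> g f \<in> DomH b) \<and>
       (\<forall>f\<in>DomH b. Hop b c (transl G \<phi> g f) = transl G \<phi> g (Hop b c f)))"

(* K: closure in the product topology of normalized positive harmonic functions *)
definition Kset :: "('x \<Rightarrow> 'x \<Rightarrow> real) \<Rightarrow> ('x \<Rightarrow> real) \<Rightarrow> 'x \<Rightarrow> ('x \<Rightarrow> real) set" where
  "Kset b c x0 = closure {f \<in> Hplus b c. f x0 = 1}"

definition KsetR :: "('g, 'b) monoid_scheme \<Rightarrow> ('g \<Rightarrow> 'x \<Rightarrow> 'x) \<Rightarrow> 'g set \<Rightarrow> ('x \<Rightarrow> 'x \<Rightarrow> real) \<Rightarrow> ('x \<Rightarrow> real) \<Rightarrow> 'x \<Rightarrow> ('x \<Rightarrow> real) set" where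
  "KsetR G \<phi> R b c x0 = {f \<in> Kset b c x0. \<forall>r\<in>R. transl G \<phi> r f = f}"

end

theory Submission
  imports Defs
begin

text \<open>Only the algebra matters: \<open>q\<close> is central modulo \<open>R\<close>, so \<open>q g = g q r\<close> for some
  \<open>r \<in> R\<close>; since translation is a representation, \<open>T\<^sub>q T\<^sub>g f = T\<^sub>g T\<^sub>q T\<^sub>r f\<close>, and \<open>T\<^sub>r f = f\<close>
  for \<open>f \<in> \<K>\<^sup>R\<close>.\<close>

lemma transl_transl:
  assumes "group_action G UNIV \<phi>" and "g \<in> carrier G" and "h \<in> carrier G"
  shows "transl G \<phi> g (transl G \<phi> h f) = transl G \<phi> (g \<otimes>\<^bsub>G\<^esub> h) f"
proof -
  interpret group_action G UNIV \<phi> by fact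
  interpret group G
    using group_hom group_hom.axioms(1) by blast
  show ?thesis
    using assms(2,3) by (simp add: transl_def composition_rule inv_mult_group)
qed

lemma transl_mult_invariant:
  assumes "group_action G UNIV \<phi>" and "h \<in> carrier G" and "r \<in> carrier G"
    and "transl G \<phi> r f = f"
  shows "transl G \<phi> (h \<otimes>\<^bsub>G\<^esub> r) f = transl G \<phi> h f"
  using assms by (metis transl_transl)

lemma (in normal) QR_mult_commute_mod:
  assumes "q \<in> QR G H" and "g \<in> carrier G"
  obtains r where "r \<in> H" and "q \<otimes> g = g \<otimes> q \<otimes> r"
proof -
  have q: "q \<in> carrier G" and central: "H #> q \<in> group_center (G Mod H)"
    using assms(1) by (auto simp: QR_def)
  have "H #> g \<in> carrier (G Mod H)"
    using assms(2) by (simp add: FactGroup_def rcosetsI subset)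
  with central have "(H #> q) <#> (H #> g) = (H #> g) <#> (H #> q)"
    by (simp add: group_center_def FactGroup_def)
  then have "H #> (q \<otimes> g) = H #> (g \<otimes> q)"
    using q assms(2) by (simp add: rcos_sum)
  moreover have "q \<otimes> g \<in> H #> (q \<otimes> g)"
    using q assms(2) by (simp add: rcos_self subgroup_axioms)
  ultimately have "q \<otimes> g \<in> (g \<otimes> q) <# H"
    using q assms(2) by (simp add: coset_eq)
  then show thesis
    using that unfolding l_coset_def by auto
qed

theorem lemma4:
  fixes G :: "('g, 'z) monoid_scheme" (structure)
    and \<phi> :: "'g \<Rightarrow> 'x::countable \<Rightarrow> 'x"
    and b :: "'x \<Rightarrow> 'x \<Rightarrow> real" and c :: "'x \<Rightarrow> real"
    and x0 :: 'x and R :: "'g set"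
  assumes "is_graph b" and "graph_connected b"
    and "nilpotent_group G"
    and "group_action G UNIV \<phi>"
    and "cocompact G \<phi>"
    and "G_invariant G \<phi> b c"
    and "R \<lhd> G"
    and "f \<in> KsetR G \<phi> R b c x0"
    and "q \<in> QR G R" and "g \<in> carrier G"
  shows "transl G \<phi> q (transl G \<phi> g f) = transl G \<phi> g (transl G \<phi> q f)"
proof -
  interpret N: normal R G by fact
  have q: "q \<in> carrier G"
    using \<open>q \<in> QR G R\<close> by (simp add: QR_def)
  obtain r where r: "r \<in> R" and qg: "q \<otimes> g = g \<otimes> q \<otimes> r"
    using N.QR_mult_commute_mod \<open>q \<in> QR G R\<close> \<open>g \<in> carrier G\<close> by blast
  have "transl G \<phi> r f = f"
    using \<open>f \<in> KsetR G \<phi> R b c x0\<close> r by (simp add: KsetR_def)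
  then have "transl G \<phi> (g \<otimes> q \<otimes> r) f = transl G \<phi> (g \<otimes> q) f"
    using \<open>group_action G UNIV \<phi>\<close> q \<open>g \<in> carrier G\<close> r N.subset
    by (intro transl_mult_invariant) auto
  then show ?thesis
    using \<open>group_action G UNIV \<phi>\<close> q \<open>g \<in> carrier G\<close> qg by (simp add: transl_transl)
qed

end
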